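(* Let $\rho$ be a congruence on a commutative semiring $A$. Then $\sqrt{\rho}$ is a congruence on $A$, and $(\sqrt{\rho})_+=\sqrt{\rho}$.
   Context: Semirings are commutative with $0$ and $1\neq0$, $0a=0$. A congruence is an equivalence relation $\rho$ on $A$ with $(a,b),(c,d)\in\rho\Rightarrow(a+c,b+d),(ac,bd)\in\rho$. Twisted product $(a,b)\ast(c,d)=(ac+bd,ad+bc)$, $(a,b)^{\ast1}=(a,b)$, $(a,b)^{\ast n}=(a,b)^{\ast(n-1)}\ast(a,b)$. For a relation $R$, $R_+=\{(a,b)\in A\times A:(a+c,b+c)\in R\ \text{for some}\ c\in A\}$. $\sqrt\rho=\{(a,b)\in A\times A:(a+c,b+c)^{\ast n}\in\rho\ \text{for some}\ c\in A,\ n\ge1\}$. *)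

theory Defs
  imports Main
begin

definition congruence :: "('a::comm_semiring_1 \<times> 'a) set \<Rightarrow> bool" where
  "congruence \<rho> \<longleftrightarrow> equiv UNIV \<rho> \<and>
     (\<forall>a b c d. (a, b) \<in> \<rho> \<longrightarrow> (c, d) \<in> \<rho> \<longrightarrow>
        (a + c, b + d) \<in> \<rho> \<and> (a * c, b * d) \<in> \<rho>)"

definition tw_prod :: "'a::comm_semiring_1 \<times> 'a \<Rightarrow> 'a \<times> 'a \<Rightarrow> 'a \<times> 'a" where
  "tw_prod p q = (fst p * fst q + snd p * snd q, fst p * snd q + snd p * fst q)"

text \<open>Twisted power: tw_pow p n is the (n+1)-fold twisted power, with
  tw_pow p 0 = p and tw_pow p (Suc n) = tw_prod (tw_pow p n) p.\<close>
fun tw_pow :: "'a::comm_semiring_1 \<times> 'a \<Rightarrow> nat \<Rightarrow> 'a \<times> 'a" where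
  "tw_pow p 0 = p"
| "tw_pow p (Suc n) = tw_prod (tw_pow p n) p"

definition plus_closure :: "('a::comm_semiring_1 \<times> 'a) set \<Rightarrow> ('a \<times> 'a) set" where
  "plus_closure R = {(a, b). \<exists>c. (a + c, b + c) \<in> R}"

definition cong_radical :: "('a::comm_semiring_1 \<times> 'a) set \<Rightarrow> ('a \<times> 'a) set" where
  "cong_radical \<rho> = {(a, b). \<exists>c n. tw_pow (a + c, b + c) n \<in> \<rho>}"

end

theory Submission
  imports Defs
begin

text \<open>The twisted product turns \<open>A \<times> A\<close> into the commutative semiring \<open>A[t]/(t\<^sup>2 - 1)\<close>,
  the pair \<open>(a, b)\<close> standing for \<open>a + b t\<close>, and \<open>n\<close>-fold twisted powers into ordinary
  powers. A congruence \<open>\<rho>\<close> becomes an ideal \<open>I\<close> of this semiring, and \<open>\<surd>\<rho>\<close> consists of the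
  pairs having a translate \<open>(a + c) + (b + c) t\<close> in the radical of \<open>I\<close>. The radical of an
  ideal is again an ideal (binomial theorem), which makes \<open>\<surd>\<rho>\<close> additive; multiplying by
  \<open>t\<close> and by \<open>c\<close> gives symmetry and compatibility with scaling, and transitivity follows
  from additivity because the common translate can be cancelled.\<close>

datatype 'a twisted = Tw 'a 'a

fun pair_of_twisted :: "'a twisted \<Rightarrow> 'a \<times> 'a" where
  "pair_of_twisted (Tw a b) = (a, b)"

instantiation twisted :: (comm_semiring_1) comm_semiring_1
begin

fun plus_twisted :: "'a twisted \<Rightarrow> 'a twisted \<Rightarrow> 'a twisted" where
  "Tw a b + Tw c d = Tw (a + c) (b + d)"

fun times_twisted :: "'a twisted \<Rightarrow> 'a twisted \<Rightarrow> 'a twisted" where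
  "Tw a b * Tw c d = Tw (a * c + b * d) (a * d + b * c)"

definition zero_twisted :: "'a twisted" where
  "0 = Tw 0 0"

definition one_twisted :: "'a twisted" where
  "1 = Tw 1 0"

instance
proof
  fix x y z :: "'a twisted"
  show "x + y + z = x + (y + z)" by (cases x; cases y; cases z) (simp add: ac_simps)
  show "x + y = y + x" by (cases x; cases y) (simp add: ac_simps)
  show "0 + x = x" by (cases x) (simp add: zero_twisted_def)
  show "x * y * z = x * (y * z)" by (cases x; cases y; cases z) (simp add: algebra_simps)
  show "x * y = y * x" by (cases x; cases y) (simp add: algebra_simps)
  show "1 * x = x" by (cases x) (simp add: one_twisted_def)
  show "(x + y) * z = x * z + y * z" by (cases x; cases y; cases z) (simp add: algebra_simps)
  show "0 * x = 0" by (cases x) (simp add: zero_twisted_def)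
  show "x * 0 = 0" by (cases x) (simp add: zero_twisted_def)
  show "(0::'a twisted) \<noteq> 1" by (simp add: zero_twisted_def one_twisted_def)
qed

end

lemma tw_pow_eq_power: "tw_pow (a, b) n = pair_of_twisted (Tw a b ^ Suc n)"
proof (induction n)
  case 0
  then show ?case by (simp add: one_twisted_def)
next
  case (Suc n)
  obtain u v where uv: "Tw a b ^ Suc n = Tw u v" by (cases "Tw a b ^ Suc n")
  then have "Tw a b ^ Suc (Suc n) = Tw u v * Tw a b" by (simp add: mult.commute)
  with Suc uv show ?case by (simp add: tw_prod_def)
qed

lemma swap_eq_mult_Tw: "Tw b a = Tw 0 1 * Tw a b"
  by simp

lemma scale_eq_mult_Tw: "Tw (c * a) (c * b) = Tw c 0 * Tw a b"
  by simp


definition semiring_ideal :: "'a::comm_semiring_1 set \<Rightarrow> bool" where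
  "semiring_ideal I \<longleftrightarrow>
     0 \<in> I \<and> (\<forall>x\<in>I. \<forall>y\<in>I. x + y \<in> I) \<and> (\<forall>x\<in>I. \<forall>y. y * x \<in> I)"

definition ideal_radical :: "'a::comm_semiring_1 set \<Rightarrow> 'a set" where
  "ideal_radical I = {x. \<exists>n. x ^ n \<in> I}"

context
  fixes I :: "'a::comm_semiring_1 set"
  assumes ideal: "semiring_ideal I"
begin

lemma ideal_zero: "0 \<in> I"
  using ideal by (simp add: semiring_ideal_def)

lemma ideal_add: "x \<in> I \<Longrightarrow> y \<in> I \<Longrightarrow> x + y \<in> I"
  using ideal by (simp add: semiring_ideal_def)

lemma ideal_mult_left: "x \<in> I \<Longrightarrow> y * x \<in> I"
  using ideal by (simp add: semiring_ideal_def)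

lemma ideal_sum: "(\<And>k. k \<in> S \<Longrightarrow> f k \<in> I) \<Longrightarrow> sum f S \<in> I"
  by (induction S rule: infinite_finite_induct) (auto intro: ideal_zero ideal_add)

lemma ideal_power_add:
  assumes "x ^ m \<in> I" "y ^ n \<in> I"
  shows "(x + y) ^ (m + n) \<in> I"
proof -
  have "(\<Sum>k\<le>m + n. of_nat (m + n choose k) * x ^ k * y ^ (m + n - k)) \<in> I"
  proof (rule ideal_sum)
    fix k
    show "of_nat (m + n choose k) * x ^ k * y ^ (m + n - k) \<in> I"
    proof (cases "m \<le> k")
      case True
      then have "x ^ k = x ^ (k - m) * x ^ m" by (simp flip: power_add)
      then have "of_nat (m + n choose k) * x ^ k * y ^ (m + n - k)
          = (of_nat (m + n choose k) * x ^ (k - m) * y ^ (m + n - k)) * x ^ m"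
        by (simp add: ac_simps)
      then show ?thesis using ideal_mult_left[OF assms(1)] by simp
    next
      case False
      then have "y ^ (m + n - k) = y ^ (m - k) * y ^ n" by (simp flip: power_add)
      then have "of_nat (m + n choose k) * x ^ k * y ^ (m + n - k)
          = (of_nat (m + n choose k) * x ^ k * y ^ (m - k)) * y ^ n"
        by (simp add: ac_simps)
      then show ?thesis using ideal_mult_left[OF assms(2)] by simp
    qed
  qed
  then show ?thesis by (simp add: binomial_ring)
qed

lemma ideal_radical_iff_Suc: "x \<in> ideal_radical I \<longleftrightarrow> (\<exists>n. x ^ Suc n \<in> I)"
proof
  assume "x \<in> ideal_radical I"
  then obtain n where "x ^ n \<in> I" by (auto simp: ideal_radical_def)
  then have "x ^ Suc n \<in> I" using ideal_mult_left by simp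
  then show "\<exists>n. x ^ Suc n \<in> I" ..
qed (auto simp: ideal_radical_def simp del: power_Suc)

lemma semiring_ideal_ideal_radical: "semiring_ideal (ideal_radical I)"
  unfolding semiring_ideal_def
proof (intro conjI ballI allI)
  show "0 \<in> ideal_radical I"
    using ideal_zero by (auto simp: ideal_radical_def intro: exI[of _ 1])
  fix x assume "x \<in> ideal_radical I"
  then obtain m where m: "x ^ m \<in> I" by (auto simp: ideal_radical_def)
  show "y * x \<in> ideal_radical I" for y
    using ideal_mult_left[OF m, of "y ^ m"] by (auto simp: ideal_radical_def power_mult_distrib)
  show "x + y \<in> ideal_radical I" if "y \<in> ideal_radical I" for y
    using that ideal_power_add[OF m] by (auto simp: ideal_radical_def)
qed

end


definition twisted_ideal :: "('a::comm_semiring_1 \<times> 'a) set \<Rightarrow> 'a twisted set" where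
  "twisted_ideal \<rho> = {x. pair_of_twisted x \<in> \<rho>}"

lemma plus_closure_cong_radical: "plus_closure (cong_radical \<rho>) = cong_radical \<rho>"
proof -
  have "(a, b) \<in> cong_radical \<rho>" if "(a + c, b + c) \<in> cong_radical \<rho>" for a b c
    using that unfolding cong_radical_def by (auto simp: add.assoc)
  then show ?thesis
    unfolding plus_closure_def by (auto intro: exI[of _ 0])
qed

context
  fixes \<rho> :: "('a::comm_semiring_1 \<times> 'a) set"
  assumes cong: "congruence \<rho>"
begin

lemma congruence_refl: "(a, a) \<in> \<rho>"
  using cong by (auto simp: congruence_def equiv_def refl_on_def)

lemma congruence_sym: "(a, b) \<in> \<rho> \<Longrightarrow> (b, a) \<in> \<rho>"
  using cong by (auto simp: congruence_def equiv_def sym_def)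

lemma congruence_add: "(a, b) \<in> \<rho> \<Longrightarrow> (c, d) \<in> \<rho> \<Longrightarrow> (a + c, b + d) \<in> \<rho>"
  using cong by (simp add: congruence_def)

lemma congruence_mult: "(a, b) \<in> \<rho> \<Longrightarrow> (c, d) \<in> \<rho> \<Longrightarrow> (a * c, b * d) \<in> \<rho>"
  using cong by (simp add: congruence_def)

lemma semiring_ideal_twisted_ideal: "semiring_ideal (twisted_ideal \<rho>)"
  unfolding semiring_ideal_def
proof (intro conjI ballI allI)
  show "0 \<in> twisted_ideal \<rho>"
    by (simp add: twisted_ideal_def zero_twisted_def congruence_refl)
  fix x assume "x \<in> twisted_ideal \<rho>"
  then obtain a b where x: "x = Tw a b" and ab: "(a, b) \<in> \<rho>"
    by (cases x) (auto simp: twisted_ideal_def)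
  show "x + y \<in> twisted_ideal \<rho>" if "y \<in> twisted_ideal \<rho>" for y
    using that x ab by (cases y) (auto simp: twisted_ideal_def congruence_add)
  show "y * x \<in> twisted_ideal \<rho>" for y
  proof (cases y)
    case (Tw c d)
    have "(c * a, c * b) \<in> \<rho>" by (rule congruence_mult[OF congruence_refl ab])
    moreover have "(d * b, d * a) \<in> \<rho>"
      by (rule congruence_mult[OF congruence_refl congruence_sym[OF ab]])
    ultimately have "(c * a + d * b, c * b + d * a) \<in> \<rho>" by (rule congruence_add)
    then show ?thesis using x Tw by (simp add: twisted_ideal_def)
  qed
qed

lemma semiring_ideal_radical_twisted_ideal: "semiring_ideal (ideal_radical (twisted_ideal \<rho>))"
  by (rule semiring_ideal_ideal_radical[OF semiring_ideal_twisted_ideal])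

lemma mem_cong_radical_iff:
  "(a, b) \<in> cong_radical \<rho> \<longleftrightarrow> (\<exists>c. Tw (a + c) (b + c) \<in> ideal_radical (twisted_ideal \<rho>))"
  unfolding ideal_radical_iff_Suc[OF semiring_ideal_twisted_ideal]
  by (simp add: cong_radical_def tw_pow_eq_power twisted_ideal_def del: power_Suc)

lemma cong_radical_refl: "(a, a) \<in> cong_radical \<rho>"
proof -
  have "Tw (a + 0) (a + 0) ^ 1 \<in> twisted_ideal \<rho>"
    by (simp add: twisted_ideal_def congruence_refl)
  then show ?thesis
    unfolding mem_cong_radical_iff ideal_radical_def by blast
qed

lemma cong_radical_sym: "(a, b) \<in> cong_radical \<rho> \<Longrightarrow> (b, a) \<in> cong_radical \<rho>"
  unfolding mem_cong_radical_iff swap_eq_mult_Tw[of "b + _"]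
  using ideal_mult_left[OF semiring_ideal_radical_twisted_ideal] by blast

lemma cong_radical_add:
  assumes "(a, b) \<in> cong_radical \<rho>" "(c, d) \<in> cong_radical \<rho>"
  shows "(a + c, b + d) \<in> cong_radical \<rho>"
proof -
  obtain e f where "Tw (a + e) (b + e) \<in> ideal_radical (twisted_ideal \<rho>)"
    and "Tw (c + f) (d + f) \<in> ideal_radical (twisted_ideal \<rho>)"
    using assms unfolding mem_cong_radical_iff by blast
  then have "Tw (a + e) (b + e) + Tw (c + f) (d + f) \<in> ideal_radical (twisted_ideal \<rho>)"
    by (rule ideal_add[OF semiring_ideal_radical_twisted_ideal])
  then have "Tw (a + c + (e + f)) (b + d + (e + f)) \<in> ideal_radical (twisted_ideal \<rho>)"
    by (simp add: ac_simps)
  then show ?thesis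
    unfolding mem_cong_radical_iff by blast
qed

lemma cong_radical_trans:
  assumes "(a, b) \<in> cong_radical \<rho>" "(b, d) \<in> cong_radical \<rho>"
  shows "(a, d) \<in> cong_radical \<rho>"
proof -
  have "(a + b, d + b) \<in> cong_radical \<rho>"
    using cong_radical_add[OF assms] by (simp add: add.commute)
  then show ?thesis
    using plus_closure_cong_radical unfolding plus_closure_def by blast
qed

lemma cong_radical_scale: "(a, b) \<in> cong_radical \<rho> \<Longrightarrow> (c * a, c * b) \<in> cong_radical \<rho>"
  unfolding mem_cong_radical_iff
  using ideal_mult_left[OF semiring_ideal_radical_twisted_ideal, of _ "Tw c 0"]
  by (metis distrib_left scale_eq_mult_Tw)

lemma cong_radical_mult:
  assumes "(a, b) \<in> cong_radical \<rho>" "(c, d) \<in> cong_radical \<rho>"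
  shows "(a * c, b * d) \<in> cong_radical \<rho>"
proof -
  have "(a * c, b * c) \<in> cong_radical \<rho>"
    using cong_radical_scale[OF assms(1), of c] by (simp add: mult.commute)
  moreover have "(b * c, b * d) \<in> cong_radical \<rho>"
    by (rule cong_radical_scale[OF assms(2)])
  ultimately show ?thesis by (rule cong_radical_trans)
qed

lemma congruence_cong_radical: "congruence (cong_radical \<rho>)"
  unfolding congruence_def equiv_def refl_on_def sym_def trans_def
  by (auto intro: cong_radical_refl cong_radical_sym cong_radical_trans
      cong_radical_add cong_radical_mult)

end

theorem proposition2p10:
  fixes \<rho> :: "('a::comm_semiring_1 \<times> 'a) set"
  assumes "congruence \<rho>"
  shows "congruence (cong_radical \<rho>) \<and> plus_closure (cong_radical \<rho>) = cong_radical \<rho>"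
  using congruence_cong_radical[OF assms] plus_closure_cong_radical by blast

end
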